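(* Fix $n\geq1$ and for $1\leq r\leq n$ let $PE_r$ be the projectivization of the bundle $E_r=\mathrm{pr}_1^*\gamma\oplus\mathrm{pr}_2^*\gamma\oplus\mathbb{C}$ over $\mathbb{CP}^{r-1}\times\mathbb{CP}^{2n-r-1}$. Then $$\gcd\big(S_n(PE_r):1\leq r\leq n\big)=\begin{cases}1, & \text{if }2n+1\text{ is not a prime power},\\ p, & \text{if }2n+1\text{ is a power of a prime }p.\end{cases}$$
   Context: $\gamma$ denotes the canonical complex line bundle, $\mathbb{C}$ the trivial line bundle. For a closed oriented $4n$-manifold $M$, $S_n(M)=\langle s_n(TM),[M]\rangle$ with $s_n$ the polynomial expressing $\sum t_i^n$ in elementary symmetric functions evaluated on Pontryagin classes. One has $S_n(PE_r)=1+(-1)^{r+1}\binom{2n}{r}$. *)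

theory Defs
  imports "HOL-Computational_Algebra.Primes"
begin

text \<open>Characteristic number S_n(PE_r) of the projectivization PE_r of
  pr1*gamma + pr2*gamma + C over CP^(r-1) x CP^(2n-r-1), given by the
  formula S_n(PE_r) = 1 + (-1)^(r+1) * binom(2n, r) stated in the context.\<close>
definition S_PE :: "nat \<Rightarrow> nat \<Rightarrow> int" where
  "S_PE n r = 1 + (-1) ^ (r + 1) * int ((2 * n) choose r)"

end

theory Submission
  imports Defs
begin

text \<open>Write \<open>S_PE n r = 1 - (-1)^r C(2n, r)\<close>. Since \<open>2n\<close> is even these values are
  symmetric under \<open>r \<mapsto> 2n - r\<close>, and by Pascal's rule consecutive ones differ by
  \<open>\<plusminus>C(2n+1, r)\<close>. Hence \<open>S_PE n 1, \<dots>, S_PE n n\<close> have the same common divisors as the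
  interior binomial coefficients \<open>C(N, r)\<close>, \<open>0 < r < N = 2n+1\<close>, whose gcd is classical.
  If \<open>q^j\<close> is the exact power of a prime \<open>q\<close> dividing \<open>N\<close>, then \<open>C(N-1, s) \<equiv> (-1)^s (mod q)\<close>
  for \<open>s < q^j\<close>; so \<open>C(N, q^j) = (N / q^j) C(N-1, q^j - 1)\<close> is prime to \<open>q\<close> unless \<open>N = q^j\<close>,
  while for \<open>N = p^k\<close> all interior coefficients are divisible by \<open>p\<close> but
  \<open>C(N, p^(k-1)) = p C(N-1, p^(k-1) - 1)\<close> is not divisible by \<open>p^2\<close>.\<close>

lemma Gcd_eq_Gcd_if_same_common_divisors:
  fixes A B :: "'a :: semiring_Gcd set"
  assumes "\<And>d. (\<forall>a\<in>A. d dvd a) \<longleftrightarrow> (\<forall>b\<in>B. d dvd b)"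
  shows "Gcd A = Gcd B"
proof (rule associated_eqI)
  show "Gcd A dvd Gcd B"
    unfolding dvd_Gcd_iff using assms[of "Gcd A"] Gcd_dvd by blast
  show "Gcd B dvd Gcd A"
    unfolding dvd_Gcd_iff using assms[of "Gcd B"] Gcd_dvd by blast
qed simp_all

lemma binomial_eq_quotient_times_binomial_pred:
  fixes N s :: nat
  assumes "s dvd N" "0 < s"
  shows "N choose s = N div s * ((N - 1) choose (s - 1))"
proof -
  obtain q where q: "N = s * q"
    using assms(1) by blast
  have "s * (N choose s) = N * ((N - 1) choose (s - 1))"
    by (rule times_binomial_minus1_eq[OF assms(2)])
  also have "\<dots> = s * (q * ((N - 1) choose (s - 1)))"
    using q by (simp only: mult.assoc)
  finally show ?thesis
    using assms(2) q by simp
qed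

lemma prime_dvd_binomial_if_prime_power_dvd:
  fixes p j N s :: nat
  assumes "prime p" "p ^ j dvd N" "0 < s" "s < p ^ j"
  shows "p dvd N choose s"
proof (rule ccontr)
  assume "\<not> p dvd N choose s"
  then have "coprime (p ^ j) (N choose s)"
    using assms(1) by (simp add: prime_imp_coprime)
  moreover have "p ^ j dvd s * (N choose s)"
    using assms(2,3) by (simp add: times_binomial_minus1_eq)
  ultimately have "p ^ j dvd s"
    by (simp add: coprime_dvd_mult_left_iff)
  then show False
    using assms(3,4) by (simp add: nat_dvd_not_less)
qed

lemma binomial_pred_cong_minus_one_power:
  fixes p j N s :: nat
  assumes "prime p" "p ^ j dvd N" "0 < N" "s < p ^ j"
  shows "int p dvd int ((N - 1) choose s) - (-1) ^ s"
  using assms(4)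
proof (induction s)
  case 0
  then show ?case by simp
next
  case (Suc s)
  have Pascal: "N choose Suc s = ((N - 1) choose s) + ((N - 1) choose Suc s)"
    using assms(3) by (cases N) simp_all
  have "int p dvd int (N choose Suc s)"
    using prime_dvd_binomial_if_prime_power_dvd[OF assms(1,2)] Suc.prems by simp
  moreover have "int p dvd int ((N - 1) choose s) - (-1) ^ s"
    using Suc by simp
  ultimately have "int p dvd int (N choose Suc s) - (int ((N - 1) choose s) - (-1) ^ s)"
    by (rule dvd_diff)
  also have "int (N choose Suc s) - (int ((N - 1) choose s) - (-1) ^ s)
      = int ((N - 1) choose Suc s) - (-1) ^ Suc s"
    using Pascal by simp
  finally show ?case .
qed

lemma prime_not_dvd_binomial_pred:
  fixes p j N s :: nat
  assumes "prime p" "p ^ j dvd N" "0 < N" "s < p ^ j"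
  shows "\<not> p dvd (N - 1) choose s"
proof
  assume "p dvd (N - 1) choose s"
  then have "int p dvd (-1) ^ s"
    using binomial_pred_cong_minus_one_power[OF assms] by (metis dvd_diff_right_iff int_dvd_int_iff)
  then have "p dvd 1"
    by (metis dvd_minus_iff int_dvd_int_iff minus_one_power_iff of_nat_1)
  then show False
    using assms(1) by simp
qed

lemma prime_power_if_dvd_interior_binomials:
  fixes q N :: nat
  assumes "prime q" "0 < N" "\<forall>r\<in>{1..<N}. q dvd N choose r"
  shows "\<exists>k. N = q ^ k"
proof -
  define j where "j = multiplicity q N"
  define m where "m = N div q ^ j"
  have dvd_N: "q ^ j dvd N"
    unfolding j_def by (rule multiplicity_dvd)
  have N_eq: "N = q ^ j * m"
    using dvd_N m_def by simp
  have "\<not> q dvd m"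
    using multiplicity_decompose[of N q] prime_gt_1_nat[OF assms(1)] assms(2)
    by (simp add: j_def m_def)
  have "q ^ j = N"
  proof (rule ccontr)
    assume "q ^ j \<noteq> N"
    then have "q ^ j \<in> {1..<N}"
      using dvd_N assms(1,2) by (auto simp: dvd_imp_le prime_gt_0_nat)
    then have "q dvd N choose q ^ j"
      using assms(3) by blast
    also have "N choose q ^ j = m * ((N - 1) choose (q ^ j - 1))"
      using binomial_eq_quotient_times_binomial_pred[OF dvd_N] assms(1)
      by (simp add: m_def prime_gt_0_nat)
    finally have "q dvd m * ((N - 1) choose (q ^ j - 1))" .
    moreover have "\<not> q dvd (N - 1) choose (q ^ j - 1)"
      using prime_not_dvd_binomial_pred[OF assms(1) dvd_N assms(2)] assms(1)
      by (simp add: prime_gt_0_nat)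
    ultimately show False
      using \<open>\<not> q dvd m\<close> assms(1) by (simp add: prime_dvd_mult_iff)
  qed
  then show ?thesis
    by (rule exI[of _ j, OF sym])
qed

lemma prime_square_not_dvd_binomial_prime_power:
  fixes p k :: nat
  assumes "prime p" "0 < k"
  shows "\<not> p ^ 2 dvd p ^ k choose p ^ (k - 1)"
proof
  let ?r = "p ^ (k - 1)"
  have N_eq: "p ^ k = ?r * p"
    using assms(2) by (simp add: power_eq_if)
  have "p ^ k choose ?r = p * ((p ^ k - 1) choose (?r - 1))"
    using binomial_eq_quotient_times_binomial_pred[of ?r "p ^ k"] N_eq assms(1)
    by (simp add: prime_gt_0_nat)
  moreover assume "p ^ 2 dvd p ^ k choose ?r"
  ultimately have "p dvd (p ^ k - 1) choose (?r - 1)"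
    using assms(1) by (simp add: power2_eq_square prime_gt_0_nat)
  moreover have "?r - 1 < p ^ k"
    using assms prime_gt_1_nat by (simp add: less_imp_diff_less)
  then have "\<not> p dvd (p ^ k - 1) choose (?r - 1)"
    using prime_not_dvd_binomial_pred[OF assms(1) dvd_refl] assms(1)
    by (simp add: prime_gt_0_nat)
  ultimately show False
    by contradiction
qed

lemma Gcd_interior_binomials_prime_power:
  fixes p k :: nat
  assumes "prime p" "0 < k"
  shows "Gcd ((\<lambda>r. p ^ k choose r) ` {1..<p ^ k}) = p"
proof (rule Gcd_eqI)
  show "normalize p = p"
    by simp
  show "p dvd b" if "b \<in> (\<lambda>r. p ^ k choose r) ` {1..<p ^ k}" for b
    using that prime_dvd_binomial_if_prime_power_dvd[OF assms(1) dvd_refl] by auto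
  show "c dvd p" if c: "\<And>b. b \<in> (\<lambda>r. p ^ k choose r) ` {1..<p ^ k} \<Longrightarrow> c dvd b" for c
  proof -
    have p_gt_1: "1 < p"
      using assms(1) by (rule prime_gt_1_nat)
    then have "1 < p ^ k"
      using assms(2) by (rule one_less_power)
    then have "c dvd p ^ k choose 1"
      by (intro c imageI) simp
    then obtain i where c_eq: "c = p ^ i"
      using divides_primepow_nat[OF assms(1)] by auto
    have "p ^ (k - 1) < p ^ k"
      using p_gt_1 assms(2) by simp
    then have "c dvd p ^ k choose p ^ (k - 1)"
      using p_gt_1 by (intro c imageI) simp
    then have "i < 2"
      using prime_square_not_dvd_binomial_prime_power[OF assms] c_eq
      by (meson dvd_trans le_imp_power_dvd not_less)
    then show "c dvd p"
      using c_eq by (auto simp: less_2_cases_iff)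
  qed
qed

lemma Gcd_interior_binomials_not_prime_power:
  fixes N :: nat
  assumes "0 < N" "\<nexists>p k. prime p \<and> N = p ^ k"
  shows "Gcd ((\<lambda>r. N choose r) ` {1..<N}) = 1"
proof (rule ccontr)
  assume "Gcd ((\<lambda>r. N choose r) ` {1..<N}) \<noteq> 1"
  then obtain q where "prime q" "q dvd Gcd ((\<lambda>r. N choose r) ` {1..<N})"
    using prime_factor_nat by blast
  then show False
    using prime_power_if_dvd_interior_binomials[of q N] assms by (auto simp: dvd_Gcd_iff)
qed

lemma dvd_alternating_binomial_minus_one_iff:
  fixes d :: int and m :: nat
  shows "(\<forall>r\<le>m. d dvd (-1) ^ r * int (m choose r) - 1)
     \<longleftrightarrow> (\<forall>r\<in>{1..m}. d dvd int (Suc m choose r))"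
proof -
  define a where "a r = (-1) ^ r * int (m choose r) - 1" for r
  have a_Suc: "a (Suc r) = a r + (-1) ^ Suc r * int (Suc m choose Suc r)" for r
    by (simp add: a_def algebra_simps)
  have dvd_sign_iff: "d dvd (-1) ^ r * x \<longleftrightarrow> d dvd x" for r and x :: int
    by (cases "even r") simp_all
  show ?thesis
    unfolding a_def[symmetric]
  proof
    assume a_dvd: "\<forall>r\<le>m. d dvd a r"
    show "\<forall>r\<in>{1..m}. d dvd int (Suc m choose r)"
    proof
      fix r
      assume "r \<in> {1..m}"
      then obtain t where t: "r = Suc t" "Suc t \<le> m"
        by (cases r) auto
      then have "d dvd a (Suc t) - a t"
        using a_dvd by (simp add: dvd_diff)
      then show "d dvd int (Suc m choose r)"
        using t(1) by (simp add: a_Suc dvd_sign_iff)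
    qed
  next
    assume binomial_dvd: "\<forall>r\<in>{1..m}. d dvd int (Suc m choose r)"
    show "\<forall>r\<le>m. d dvd a r"
    proof (intro allI impI)
      fix r
      show "r \<le> m \<Longrightarrow> d dvd a r"
      proof (induction r)
        case 0
        then show ?case
          by (simp add: a_def)
      next
        case (Suc r)
        then have "d dvd a r"
          by simp
        moreover have "Suc r \<in> {1..m}"
          using Suc.prems by simp
        then have "d dvd (-1) ^ Suc r * int (Suc m choose Suc r)"
          unfolding dvd_sign_iff using binomial_dvd by blast
        ultimately show ?case
          unfolding a_Suc by (rule dvd_add)
      qed
    qed
  qed
qed

lemma dvd_S_PE_iff_dvd_interior_binomials:
  fixes d :: int and n :: nat
  shows "(\<forall>r\<in>{1..n}. d dvd S_PE n r)
     \<longleftrightarrow> (\<forall>r\<in>{1..<2 * n + 1}. d dvd int ((2 * n + 1) choose r))"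
proof -
  define a where "a r = (-1) ^ r * int ((2 * n) choose r) - 1" for r
  have S_PE_eq: "S_PE n r = - a r" for r
    by (simp add: S_PE_def a_def)
  have a_symmetric: "a (2 * n - r) = a r" if "r \<le> 2 * n" for r
  proof -
    have "even (2 * n - r) \<longleftrightarrow> even r"
      using that by simp
    then show ?thesis
      using that by (simp add: a_def binomial_symmetric[symmetric] minus_one_power_iff)
  qed
  have "(\<forall>r\<in>{1..n}. d dvd a r) \<longleftrightarrow> (\<forall>r\<le>2 * n. d dvd a r)"
  proof (intro iffI allI impI ballI)
    fix r
    assume a_dvd: "\<forall>r\<in>{1..n}. d dvd a r" and "r \<le> 2 * n"
    then consider "r = 0" | "r = 2 * n" | "r \<in> {1..n}" | "2 * n - r \<in> {1..n}"
      by fastforce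
    then show "d dvd a r"
    proof cases
      case 4
      then show ?thesis
        using a_dvd a_symmetric[OF \<open>r \<le> 2 * n\<close>] by metis
    qed (use a_dvd a_symmetric[of 0] in \<open>auto simp: a_def\<close>)
  qed simp
  also have "\<dots> \<longleftrightarrow> (\<forall>r\<in>{1..2 * n}. d dvd int (Suc (2 * n) choose r))"
    unfolding a_def by (rule dvd_alternating_binomial_minus_one_iff)
  finally show ?thesis
    by (simp add: S_PE_eq atLeastLessThanSuc_atLeastAtMost)
qed

lemma Gcd_S_PE_eq_Gcd_interior_binomials:
  "Gcd (S_PE n ` {1..n}) = int (Gcd ((\<lambda>r. (2 * n + 1) choose r) ` {1..<2 * n + 1}))"
  unfolding Gcd_int_eq[symmetric] image_image
  by (rule Gcd_eq_Gcd_if_same_common_divisors)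
    (unfold ball_simps(9), rule dvd_S_PE_iff_dvd_interior_binomials)

theorem lemma8p4:
  fixes n :: nat
  assumes "n \<ge> 1"
  shows "(\<not> (\<exists>p k. prime (p::nat) \<and> 2 * n + 1 = p ^ k) \<longrightarrow>
            Gcd (S_PE n ` {1..n}) = 1)
       \<and> (\<forall>(p::nat) k. prime p \<and> 2 * n + 1 = p ^ k \<longrightarrow>
            Gcd (S_PE n ` {1..n}) = int p)"
proof (intro conjI impI allI)
  assume "\<not> (\<exists>p k. prime (p::nat) \<and> 2 * n + 1 = p ^ k)"
  then have "Gcd ((\<lambda>r. (2 * n + 1) choose r) ` {1..<2 * n + 1}) = 1"
    by (intro Gcd_interior_binomials_not_prime_power) auto
  then show "Gcd (S_PE n ` {1..n}) = 1"
    unfolding Gcd_S_PE_eq_Gcd_interior_binomials by simp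
next
  fix p k :: nat
  assume "prime p \<and> 2 * n + 1 = p ^ k"
  then have p: "prime p" and N_eq: "2 * n + 1 = p ^ k"
    by auto
  have "0 < k"
    using N_eq assms by (cases k) auto
  have "Gcd ((\<lambda>r. (2 * n + 1) choose r) ` {1..<2 * n + 1}) = p"
    unfolding N_eq using p \<open>0 < k\<close> by (rule Gcd_interior_binomials_prime_power)
  then show "Gcd (S_PE n ` {1..n}) = int p"
    unfolding Gcd_S_PE_eq_Gcd_interior_binomials by simp
qed

end
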